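(* Let $G$ be a reflexive topological group that respects compactness. Then the convergence group $\Gamma_c G$ is $g$-barrelled.
   Context: All groups are abelian. A convergence structure on a set $X$ assigns to each $x \in X$ a collection of filters on $X$, said to converge to $x$ (written $\mathcal F \to x$). This assignment must satisfy three conditions: the point ultrafilter $\dot x$ converges to $x$; if $\mathcal F \to x$ and $\mathcal G \to x$ then $\mathcal F \cap \mathcal G \to x$; and filters finer than a filter converging to $x$ converge to $x$. A map is continuous if it maps filters converging to $x$ to filters converging to the image of $x$. A convergence group is an abelian group with a convergence structure such that $\mathcal F \to x$, $\mathcal G \to y$ imply $\mathcal F - \mathcal G \to x-y$. Every topological group is a convergence group, with convergent filters being those finer than the neighbourhood filter. $\mathbb T = \mathbb R/\mathbb Z$. For convergence groups $G,H$, $\Gamma(G,H)$ is the group of continuous homomorphisms, and $\Gamma G = \Gamma(G,\mathbb T)$. $\Gamma_s(G,H)$ denotes $\Gamma(G,H)$ with the topology of pointwise convergence (the weak topology). $\Gamma_c(G,H)$ denotes $\Gamma(G,H)$ with the continuous convergence structure: $\Phi \to \varphi$ iff for every $\mathcal F \to x$ in $G$, the filter generated by $\{\{\psi(y):\psi \in A, y \in F\} : A \in \Phi, F \in \mathcal F\}$ converges to $\varphi(x)$ in $H$. Write $\Gamma_s G$, $\Gamma_c G$ when $H = \mathbb T$. A set $M \subseteq \Gamma(G,H)$ is equicontinuous if for every filter $\mathcal F \to 0$ in $G$, the filter $M(\mathcal F)$ converges to $0$ in $H$, where $M(\mathcal F)$ is generated by $\{\varphi(x) : \varphi \in M, x \in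 F\}$, $F \in \mathcal F$. A convergence group $G$ is $g$-barrelled if every compact subset of $\Gamma_s G$ is equicontinuous (as a subset of $\Gamma(G,\mathbb T)$). $G$ is reflexive if the canonical map $\kappa_G : G \to \Gamma_c\Gamma_c G$, $\kappa_G(x)(\varphi) = \varphi(x)$, is an isomorphism of convergence groups. A topological group $G$ respects compactness if every subset of $G$ compact in the weak topology $\sigma(G,\Gamma G)$ (the initial topology induced by all continuous characters) is compact in $G$. *)

theory Defs
  imports "HOL-Analysis.Analysis" "HOL-Algebra.Group"
begin

text \<open>A (abelian) group in the HOL-Algebra sense together with a convergence
relation: cv F x means that the filter F converges to x.\<close>

record 'a convgroup = "'a monoid" + cv :: "'a filter \<Rightarrow> 'a \<Rightarrow> bool"

definition filter_on :: "'a set \<Rightarrow> 'a filter \<Rightarrow> bool" where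
  "filter_on X F \<longleftrightarrow> F \<noteq> bot \<and> eventually (\<lambda>y. y \<in> X) F"

text \<open>F - H: the filter generated by the sets A - B (A in F, B in H).\<close>
definition filter_diff :: "('a, 'b) convgroup_scheme \<Rightarrow> 'a filter \<Rightarrow> 'a filter \<Rightarrow> 'a filter" where
  "filter_diff G F H = filtermap (\<lambda>(a, b). a \<otimes>\<^bsub>G\<^esub> inv\<^bsub>G\<^esub> b) (F \<times>\<^sub>F H)"

definition convergence_group :: "('a, 'b) convgroup_scheme \<Rightarrow> bool" where
  "convergence_group G \<longleftrightarrow> comm_group G
   \<and> (\<forall>F x. cv G F x \<longrightarrow> x \<in> carrier G \<and> filter_on (carrier G) F)
   \<and> (\<forall>x\<in>carrier G. cv G (principal {x}) x)
   \<and> (\<forall>F H x. cv G F x \<and> cv G H x \<longrightarrow> cv G (sup F H) x)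
   \<and> (\<forall>F F' x. cv G F x \<and> F' \<le> F \<and> F' \<noteq> bot \<longrightarrow> cv G F' x)
   \<and> (\<forall>F H x y. cv G F x \<and> cv G H y \<longrightarrow>
        cv G (filter_diff G F H) (x \<otimes>\<^bsub>G\<^esub> inv\<^bsub>G\<^esub> y))"

definition top_conv :: "'a topology \<Rightarrow> 'a filter \<Rightarrow> 'a \<Rightarrow> bool" where
  "top_conv \<tau> F x \<longleftrightarrow> x \<in> topspace \<tau> \<and> filter_on (topspace \<tau>) F \<and> F \<le> nhdsin \<tau> x"

definition topological_group :: "'a monoid \<Rightarrow> 'a topology \<Rightarrow> bool" where
  "topological_group G \<tau> \<longleftrightarrow> comm_group G \<and> topspace \<tau> = carrier G
   \<and> continuous_map (prod_topology \<tau> \<tau>) \<tau> (\<lambda>(x, y). x \<otimes>\<^bsub>G\<^esub> y)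
   \<and> continuous_map \<tau> \<tau> (\<lambda>x. inv\<^bsub>G\<^esub> x)"

definition top_cgroup :: "'a monoid \<Rightarrow> 'a topology \<Rightarrow> 'a convgroup" where
  "top_cgroup G \<tau> = \<lparr>carrier = carrier G, mult = mult G, one = one G, cv = top_conv \<tau>\<rparr>"

text \<open>T = R/Z is realised (isomorphically, via t \<mapsto> exp(2 pi i t)) as the
unit circle in the complex plane, with multiplication and its usual topology.\<close>

definition T_top :: "complex topology" where
  "T_top = top_of_set (sphere 0 1)"

definition Tgroup :: "complex convgroup" where
  "Tgroup = \<lparr>carrier = sphere 0 1, mult = (*), one = 1, cv = top_conv T_top\<rparr>"

definition cont_map :: "('a, 'c) convgroup_scheme \<Rightarrow> ('b, 'd) convgroup_scheme \<Rightarrow> ('a \<Rightarrow> 'b) \<Rightarrow> bool" where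
  "cont_map G H f \<longleftrightarrow> f \<in> carrier G \<rightarrow> carrier H
     \<and> (\<forall>F x. cv G F x \<longrightarrow> cv H (filtermap f F) (f x))"

text \<open>Evaluation filter: generated by the sets {psi y | psi in A, y in F}.\<close>
definition eval_filter :: "('a \<Rightarrow> 'b) filter \<Rightarrow> 'a filter \<Rightarrow> 'b filter" where
  "eval_filter \<Phi> F = filtermap (\<lambda>(\<psi>, y). \<psi> y) (\<Phi> \<times>\<^sub>F F)"

definition Gamma_c :: "('a, 'c) convgroup_scheme \<Rightarrow> ('b, 'd) convgroup_scheme \<Rightarrow> ('a \<Rightarrow> 'b) convgroup" where
  "Gamma_c G H =
     (let C = {f. f \<in> hom G H \<and> f \<in> extensional (carrier G) \<and> cont_map G H f}
      in \<lparr>carrier = C,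
          mult = (\<lambda>f g. \<lambda>x\<in>carrier G. f x \<otimes>\<^bsub>H\<^esub> g x),
          one = (\<lambda>x\<in>carrier G. \<one>\<^bsub>H\<^esub>),
          cv = (\<lambda>\<Phi> \<phi>. \<phi> \<in> C \<and> filter_on C \<Phi> \<and>
                 (\<forall>F x. cv G F x \<longrightarrow> cv H (eval_filter \<Phi> F) (\<phi> x)))\<rparr>)"

definition dual_c :: "('a, 'c) convgroup_scheme \<Rightarrow> ('a \<Rightarrow> complex) convgroup" where
  "dual_c G = Gamma_c G Tgroup"

definition dual_s_top :: "('a, 'c) convgroup_scheme \<Rightarrow> ('a \<Rightarrow> complex) topology" where
  "dual_s_top G = subtopology (product_topology (\<lambda>_. T_top) (carrier G)) (carrier (dual_c G))"

text \<open>Equicontinuity of M in Gamma(G,H).  The empty set is (vacuously)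
equicontinuous; otherwise M(F) is the filter generated by
{phi x | phi in M, x in F}.\<close>
definition equicontinuous :: "('a, 'c) convgroup_scheme \<Rightarrow> ('b, 'd) convgroup_scheme \<Rightarrow> ('a \<Rightarrow> 'b) set \<Rightarrow> bool" where
  "equicontinuous G H M \<longleftrightarrow> M \<subseteq> carrier (Gamma_c G H) \<and>
     (M = {} \<or> (\<forall>F. cv G F \<one>\<^bsub>G\<^esub> \<longrightarrow> cv H (eval_filter (principal M) F) \<one>\<^bsub>H\<^esub>))"

definition g_barrelled :: "('a, 'c) convgroup_scheme \<Rightarrow> bool" where
  "g_barrelled G \<longleftrightarrow> (\<forall>M. compactin (dual_s_top G) M \<longrightarrow> equicontinuous G Tgroup M)"

definition kappa :: "('a, 'c) convgroup_scheme \<Rightarrow> 'a \<Rightarrow> (('a \<Rightarrow> complex) \<Rightarrow> complex)" where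
  "kappa G = (\<lambda>x\<in>carrier G. \<lambda>\<phi>\<in>carrier (dual_c G). \<phi> x)"

definition reflexive :: "('a, 'c) convgroup_scheme \<Rightarrow> bool" where
  "reflexive G \<longleftrightarrow> kappa G \<in> iso G (dual_c (dual_c G))
     \<and> cont_map G (dual_c (dual_c G)) (kappa G)
     \<and> cont_map (dual_c (dual_c G)) G (inv_into (carrier G) (kappa G))"

definition weak_top :: "'a monoid \<Rightarrow> 'a topology \<Rightarrow> 'a topology" where
  "weak_top G \<tau> = pullback_topology (carrier G)
     (\<lambda>x. \<lambda>\<phi>\<in>carrier (dual_c (top_cgroup G \<tau>)). \<phi> x)
     (product_topology (\<lambda>_. T_top) (carrier (dual_c (top_cgroup G \<tau>))))"

definition respects_compactness :: "'a monoid \<Rightarrow> 'a topology \<Rightarrow> bool" where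
  "respects_compactness G \<tau> \<longleftrightarrow>
     (\<forall>K. K \<subseteq> carrier G \<and> compactin (weak_top G \<tau>) K \<longrightarrow> compactin \<tau> K)"

end

theory Submission
  imports Defs
begin

(* Let G be a reflexive topological group respecting compactness
   and D = Gamma_c G.  A set M compact in Gamma_s D consists of evaluations:
   since kappa is bijective, M = kappa(K) for K = kappa^-1(M).  As the weak
   topology sigma(G, Gamma G) is the pullback of the product topology along
   kappa, K is weakly compact, hence compact in G because G respects
   compactness.  Equicontinuity of M = kappa(K) means that every filter Phi
   converging to 1 in D converges to 1 uniformly on K; and continuous
   convergence of characters does converge uniformly on compact sets. *)

text \<open>A set whose image is compact is compact for the pullback topology.  This is
what transfers compactness from \<open>\<Gamma>\<^sub>s D\<close> back to the weak topology of \<open>G\<close>.\<close>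

lemma compactin_pullback_topology:
  assumes fK: "compactin T (f ` K)" and KA: "K \<subseteq> A"
  shows "compactin (pullback_topology A f T) K"
  unfolding compactin_def
proof (intro conjI allI impI)
  show "K \<subseteq> topspace (pullback_topology A f T)"
    using compactin_subset_topspace[OF fK] KA by (auto simp: topspace_pullback_topology)
next
  fix \<U> assume cover: "(\<forall>B\<in>\<U>. openin (pullback_topology A f T) B) \<and> K \<subseteq> \<Union>\<U>"
  then obtain g where g: "\<And>B. B \<in> \<U> \<Longrightarrow> openin T (g B) \<and> B = f -` g B \<inter> A"
    unfolding openin_pullback_topology by metis
  have "f ` K \<subseteq> \<Union>(g ` \<U>)"
  proof
    fix y assume "y \<in> f ` K"
    then obtain k B where "y = f k" "k \<in> B" "B \<in> \<U>"
      using cover by blast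
    then show "y \<in> \<Union>(g ` \<U>)"
      using g by blast
  qed
  moreover have "\<forall>B\<in>g ` \<U>. openin T B"
    using g by blast
  ultimately obtain \<V> where "finite \<V>" "\<V> \<subseteq> g ` \<U>" "f ` K \<subseteq> \<Union>\<V>"
    using fK unfolding compactin_def by meson
  then obtain \<W> where W: "\<W> \<subseteq> \<U>" "finite \<W>" "f ` K \<subseteq> \<Union>(g ` \<W>)"
    by (metis finite_subset_image)
  have "K \<subseteq> \<Union>\<W>"
  proof
    fix k assume "k \<in> K"
    then obtain B where "B \<in> \<W>" "f k \<in> g B"
      using W(3) by blast
    then show "k \<in> \<Union>\<W>"
      using g W(1) KA \<open>k \<in> K\<close> by blast
  qed
  then show "\<exists>\<F>. finite \<F> \<and> \<F> \<subseteq> \<U> \<and> K \<subseteq> \<Union>\<F>"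
    using W by blast
qed

lemma top_conv_nhdsin:
  assumes "x \<in> topspace X"
  shows "top_conv X (nhdsin X x) x"
proof -
  have "nhdsin X x \<noteq> bot"
  proof
    assume "nhdsin X x = bot"
    then have "eventually (\<lambda>_. False) (nhdsin X x)" by simp
    then show False using assms by (auto simp: eventually_nhdsin)
  qed
  moreover have "eventually (\<lambda>y. y \<in> topspace X) (nhdsin X x)"
    using assms by (auto simp: eventually_nhdsin)
  ultimately show ?thesis
    using assms by (simp add: top_conv_def filter_on_def)
qed

lemma eval_filter_nhdsin_local:
  assumes cvg: "eval_filter \<Phi> (nhdsin X x) \<le> nhdsin Y c"
    and x: "x \<in> topspace X" and V: "openin Y V" "c \<in> V"
  obtains U P where "openin X U" "x \<in> U" "eventually P \<Phi>"
    "\<And>\<phi> y. P \<phi> \<Longrightarrow> y \<in> U \<Longrightarrow> \<phi> y \<in> V"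
proof -
  have "eventually (\<lambda>z. z \<in> V) (nhdsin Y c)"
    using V by (auto simp: eventually_nhdsin)
  then have "eventually (\<lambda>z. z \<in> V) (eval_filter \<Phi> (nhdsin X x))"
    using cvg filter_leD by blast
  then obtain P Q where PQ: "eventually P \<Phi>" "eventually Q (nhdsin X x)"
    "\<And>\<phi> y. P \<phi> \<Longrightarrow> Q y \<Longrightarrow> \<phi> y \<in> V"
    by (auto simp: eval_filter_def eventually_filtermap eventually_prod_filter)
  moreover obtain U where "openin X U" "x \<in> U" "\<forall>y\<in>U. Q y"
    using PQ(2) x by (auto simp: eventually_nhdsin)
  ultimately show thesis
    using that by blast
qed

text \<open>Continuous convergence to a constant is uniform on compact sets:
finitely many of the neighbourhoods above cover \<open>K\<close>.\<close>

lemma eventually_uniform_on_compactin: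
  assumes K: "compactin X K"
    and cvg: "\<And>x. x \<in> K \<Longrightarrow> eval_filter \<Phi> (nhdsin X x) \<le> nhdsin Y c"
    and V: "openin Y V" "c \<in> V"
  shows "eventually (\<lambda>\<phi>. \<forall>x\<in>K. \<phi> x \<in> V) \<Phi>"
proof -
  have KX: "K \<subseteq> topspace X"
    using K by (rule compactin_subset_topspace)
  obtain U P where UP: "\<And>x. x \<in> K \<Longrightarrow> openin X (U x) \<and> x \<in> U x \<and> eventually (P x) \<Phi> \<and>
      (\<forall>\<phi> y. P x \<phi> \<longrightarrow> y \<in> U x \<longrightarrow> \<phi> y \<in> V)"
  proof -
    have "\<forall>x\<in>K. \<exists>U P. openin X U \<and> x \<in> U \<and> eventually P \<Phi> \<and>
        (\<forall>\<phi> y. P \<phi> \<longrightarrow> y \<in> U \<longrightarrow> \<phi> y \<in> V)"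
    proof
      fix x assume "x \<in> K"
      then show "\<exists>U P. openin X U \<and> x \<in> U \<and> eventually P \<Phi> \<and>
          (\<forall>\<phi> y. P \<phi> \<longrightarrow> y \<in> U \<longrightarrow> \<phi> y \<in> V)"
        using eval_filter_nhdsin_local[OF cvg _ V] KX by (metis subsetD)
    qed
    then show thesis
      using that by metis
  qed
  have "\<forall>B\<in>U ` K. openin X B" "K \<subseteq> \<Union>(U ` K)"
    using UP by auto
  then obtain F where F: "F \<subseteq> K" "finite F" "K \<subseteq> \<Union>(U ` F)"
    using K unfolding compactin_def by (metis finite_subset_image)
  have "eventually (\<lambda>\<phi>. \<forall>x\<in>F. P x \<phi>) \<Phi>"
    using F UP by (intro eventually_ball_finite) auto
  then show ?thesis
    by (rule eventually_mono) (use F UP in blast)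
qed

lemma eval_filter_evaluations_le_nhdsin:
  assumes C: "eventually (\<lambda>\<phi>. \<phi> \<in> C) \<Phi>" and c: "c \<in> topspace Y"
    and unif: "\<And>V. openin Y V \<Longrightarrow> c \<in> V \<Longrightarrow> eventually (\<lambda>\<phi>. \<forall>x\<in>K. \<phi> x \<in> V) \<Phi>"
  shows "eval_filter (principal ((\<lambda>x. \<lambda>\<phi>\<in>C. \<phi> x) ` K)) \<Phi> \<le> nhdsin Y c"
proof (rule filter_leI)
  fix R assume "eventually R (nhdsin Y c)"
  then obtain V where V: "openin Y V" "c \<in> V" "\<forall>z\<in>V. R z"
    using c by (auto simp: eventually_nhdsin)
  let ?E = "(\<lambda>x. \<lambda>\<phi>\<in>C. \<phi> x) ` K" and ?P = "\<lambda>\<phi>. \<phi> \<in> C \<and> (\<forall>x\<in>K. \<phi> x \<in> V)"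
  have "eventually ?P \<Phi>"
    using C unif[OF V(1,2)] by (rule eventually_conj)
  moreover have "\<forall>\<psi> \<phi>. \<psi> \<in> ?E \<longrightarrow> ?P \<phi> \<longrightarrow> R (\<psi> \<phi>)"
    using V(3) by auto
  ultimately show "eventually R (eval_filter (principal ?E) \<Phi>)"
    unfolding eval_filter_def eventually_filtermap eventually_prod_filter
    by (intro exI[of _ "\<lambda>\<psi>. \<psi> \<in> ?E"] exI[of _ ?P]) (simp add: eventually_principal)
qed

lemma carrier_dual_c:
  "carrier (dual_c H) = {f. f \<in> hom H Tgroup \<and> f \<in> extensional (carrier H) \<and> cont_map H Tgroup f}"
  by (simp add: dual_c_def Gamma_c_def Let_def)

lemma cv_dual_c:
  "cv (dual_c H) \<Phi> \<phi> \<longleftrightarrow> \<phi> \<in> carrier (dual_c H) \<and> filter_on (carrier (dual_c H)) \<Phi> \<and>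
     (\<forall>F x. cv H F x \<longrightarrow> cv Tgroup (eval_filter \<Phi> F) (\<phi> x))"
  by (simp add: dual_c_def Gamma_c_def Let_def)

lemma one_dual_c: "\<one>\<^bsub>dual_c H\<^esub> = (\<lambda>x\<in>carrier H. 1)"
  by (simp add: dual_c_def Gamma_c_def Let_def Tgroup_def)

lemma cv_Tgroup: "cv Tgroup = top_conv T_top"
  by (simp add: Tgroup_def)

lemma one_Tgroup: "\<one>\<^bsub>Tgroup\<^esub> = 1"
  by (simp add: Tgroup_def)

lemma topspace_T_top: "topspace T_top = sphere 0 1"
  by (simp add: T_top_def)

lemma compactin_dual_s_top_subset:
  "compactin (dual_s_top D) M \<Longrightarrow> M \<subseteq> carrier (dual_c D)"
  using compactin_subset_topspace by (fastforce simp: dual_s_top_def)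

lemma dual_c_cv_one_uniform_on_compactin:
  assumes X: "topspace X = carrier G" and K: "compactin X K"
    and cvg: "cv (dual_c (top_cgroup G X)) \<Phi> \<one>\<^bsub>dual_c (top_cgroup G X)\<^esub>"
    and V: "openin T_top V" "1 \<in> V"
  shows "eventually (\<lambda>\<phi>. \<forall>x\<in>K. \<phi> x \<in> V) \<Phi>"
proof (rule eventually_uniform_on_compactin[OF K _ V])
  fix x assume "x \<in> K"
  then have x: "x \<in> carrier G"
    using compactin_subset_topspace[OF K] X by auto
  have "cv (top_cgroup G X) (nhdsin X x) x"
    using top_conv_nhdsin[of x X] x X by (simp add: top_cgroup_def)
  with cvg have "cv Tgroup (eval_filter \<Phi> (nhdsin X x)) (\<one>\<^bsub>dual_c (top_cgroup G X)\<^esub> x)"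
    unfolding cv_dual_c by blast
  then have "top_conv T_top (eval_filter \<Phi> (nhdsin X x)) 1"
    using x by (simp add: one_dual_c cv_Tgroup top_cgroup_def)
  then show "eval_filter \<Phi> (nhdsin X x) \<le> nhdsin T_top 1"
    by (simp add: top_conv_def)
qed

lemma equicontinuous_evaluations:
  fixes H :: "('a, 'c) convgroup_scheme"
  defines "D \<equiv> dual_c H"
  assumes M: "M \<subseteq> carrier (dual_c D)" "M = (\<lambda>x. \<lambda>\<phi>\<in>carrier D. \<phi> x) ` K"
    and unif: "\<And>\<Phi> V. cv D \<Phi> \<one>\<^bsub>D\<^esub> \<Longrightarrow> openin T_top V \<Longrightarrow> 1 \<in> V \<Longrightarrow>
      eventually (\<lambda>\<phi>. \<forall>x\<in>K. \<phi> x \<in> V) \<Phi>"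
  shows "equicontinuous D Tgroup M"
proof -
  have "top_conv T_top (eval_filter (principal M) \<Phi>) 1"
    if ne: "M \<noteq> {}" and cvg: "cv D \<Phi> \<one>\<^bsub>D\<^esub>" for \<Phi>
  proof -
    have \<Phi>: "\<Phi> \<noteq> bot" "eventually (\<lambda>\<phi>. \<phi> \<in> carrier D) \<Phi>"
      using cvg by (auto simp: D_def cv_dual_c filter_on_def)
    have on_circle: "\<psi> \<phi> \<in> sphere 0 1" if "\<psi> \<in> M" "\<phi> \<in> carrier D" for \<psi> \<phi>
    proof -
      have "\<psi> \<in> hom D Tgroup"
        using that M(1) by (auto simp: carrier_dual_c)
      then show ?thesis
        using hom_in_carrier that(2) by (fastforce simp: Tgroup_def)
    qed
    have "eval_filter (principal M) \<Phi> \<noteq> bot"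
      using ne \<Phi>(1)
      by (simp add: eval_filter_def filtermap_bot_iff prod_filter_eq_bot principal_eq_bot_iff)
    moreover have "eventually (\<lambda>z. z \<in> sphere 0 1) (eval_filter (principal M) \<Phi>)"
      unfolding eval_filter_def eventually_filtermap eventually_prod_filter eventually_principal
      by (intro exI[of _ "\<lambda>\<psi>. \<psi> \<in> M"] exI[of _ "\<lambda>\<phi>. \<phi> \<in> carrier D"])
        (use on_circle \<Phi>(2) in auto)
    moreover have "eval_filter (principal M) \<Phi> \<le> nhdsin T_top 1"
      unfolding M(2)
      by (rule eval_filter_evaluations_le_nhdsin[OF \<Phi>(2)])
        (auto simp: topspace_T_top intro: unif[OF cvg])
    ultimately show ?thesis
      by (simp add: top_conv_def filter_on_def topspace_T_top)
  qed
  moreover have "M \<subseteq> carrier (Gamma_c D Tgroup)"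
    using M(1) by (simp add: dual_c_def)
  ultimately show ?thesis
    unfolding equicontinuous_def by (auto simp: cv_Tgroup one_Tgroup)
qed

lemma compact_in_dual_s_dual_c:
  fixes G :: "'a monoid" and X :: "'a topology"
  defines "D \<equiv> dual_c (top_cgroup G X)"
  assumes refl: "reflexive (top_cgroup G X)" and resp: "respects_compactness G X"
    and M: "compactin (dual_s_top D) M"
  obtains K where "compactin X K" "M = (\<lambda>x. \<lambda>\<phi>\<in>carrier D. \<phi> x) ` K"
proof -
  let ?ev = "\<lambda>x. \<lambda>\<phi>\<in>carrier D. \<phi> x"
  have carrier_G: "carrier (top_cgroup G X) = carrier G"
    by (simp add: top_cgroup_def)
  have M_sub: "M \<subseteq> carrier (dual_c D)"
    using M by (rule compactin_dual_s_top_subset)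
  have M_prod: "compactin (product_topology (\<lambda>_. T_top) (carrier D)) M"
    using M by (simp add: dual_s_top_def compactin_subtopology)
  have "kappa (top_cgroup G X) \<in> iso (top_cgroup G X) (dual_c D)"
    using refl unfolding reflexive_def D_def by simp
  then have kappa_bij: "bij_betw (kappa (top_cgroup G X)) (carrier G) (carrier (dual_c D))"
    by (simp add: iso_def carrier_G)
  have kappa_eq: "\<And>x. x \<in> carrier G \<Longrightarrow> kappa (top_cgroup G X) x = ?ev x"
    by (simp add: kappa_def D_def carrier_G)
  have bij: "bij_betw ?ev (carrier G) (carrier (dual_c D))"
    using bij_betw_cong[of "carrier G" "kappa (top_cgroup G X)" ?ev] kappa_eq kappa_bij by simp
  define K where "K = {x \<in> carrier G. ?ev x \<in> M}"
  have K_sub: "K \<subseteq> carrier G"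
    by (simp add: K_def)
  have MK: "M = ?ev ` K"
  proof
    show "M \<subseteq> ?ev ` K"
    proof
      fix \<psi> assume "\<psi> \<in> M"
      then obtain x where "x \<in> carrier G" "\<psi> = ?ev x"
        using bij M_sub unfolding bij_betw_def by blast
      then show "\<psi> \<in> ?ev ` K"
        using \<open>\<psi> \<in> M\<close> by (simp add: K_def)
    qed
  qed (simp add: K_def image_subset_iff)
  have "compactin (product_topology (\<lambda>_. T_top) (carrier D)) (?ev ` K)"
    using M_prod MK by simp
  then have "compactin (weak_top G X) K"
    unfolding weak_top_def D_def[symmetric] by (rule compactin_pullback_topology[OF _ K_sub])
  then have "compactin X K"
    using resp K_sub by (simp add: respects_compactness_def)
  then show thesis
    using that MK by blast
qed

theorem proposition2p5:
  fixes G :: "'a monoid" and \<tau> :: "'a topology"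
  assumes "topological_group G \<tau>"
    and "reflexive (top_cgroup G \<tau>)"
    and "respects_compactness G \<tau>"
  shows "g_barrelled (dual_c (top_cgroup G \<tau>))"
  unfolding g_barrelled_def
proof (intro allI impI)
  let ?D = "dual_c (top_cgroup G \<tau>)"
  fix M assume M: "compactin (dual_s_top ?D) M"
  obtain K where K: "compactin \<tau> K" "M = (\<lambda>x. \<lambda>\<phi>\<in>carrier ?D. \<phi> x) ` K"
    using compact_in_dual_s_dual_c[OF assms(2,3) M] .
  have M_sub: "M \<subseteq> carrier (dual_c ?D)"
    using M by (rule compactin_dual_s_top_subset)
  have X: "topspace \<tau> = carrier G"
    using assms(1) by (simp add: topological_group_def)
  show "equicontinuous ?D Tgroup M"
  proof (rule equicontinuous_evaluations[OF M_sub K(2)])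
    fix \<Phi> V assume "cv ?D \<Phi> \<one>\<^bsub>?D\<^esub>" "openin T_top V" "1 \<in> V"
    then show "eventually (\<lambda>\<phi>. \<forall>x\<in>K. \<phi> x \<in> V) \<Phi>"
      by (rule dual_c_cv_one_uniform_on_compactin[OF X K(1)])
  qed
qed

end
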